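(* Let $\tilde{\mathfrak g}$ be a real solvable Lie algebra with a metric $\langle,\rangle$ and a standard decomposition $\tilde{\mathfrak g}=\mathfrak g\oplus^\perp\mathfrak a$. Let $e_1,\dots,e_k$ be an orthonormal basis of $\mathfrak a$, $\langle e_s,e_r\rangle=\epsilon_s\delta_{sr}$ with $\epsilon_s=\pm1$, and let $\phi_s\in\operatorname{Der}\mathfrak g$ be defined by $[v,e_s]=\phi_s(v)$ for $v\in\mathfrak g$, with $\phi_s^*$ its adjoint with respect to the restriction of $\langle,\rangle$ to $\mathfrak g$. Let $\widetilde{\operatorname{ric}}$ be the Ricci tensor of $\tilde{\mathfrak g}$ and $\operatorname{ric}$ the Ricci tensor of $\mathfrak g$ with the restricted metric. Then for all $v,w\in\mathfrak g$ and all $s,r$: $\widetilde{\operatorname{ric}}(v,w)=\operatorname{ric}(v,w)+\sum_s\Bigl(\frac12\epsilon_s\langle[\phi_s,\phi_s^*](v),w\rangle-\frac12\epsilon_s\langle(\phi_s+\phi_s^* )(v),w\rangle\operatorname{Tr}\phi_s\Bigr)$, $\widetilde{\operatorname{ric}}(v,e_s)=\frac12\langle\operatorname{ad}v,\phi_s\rangle$, $\widetilde{\operatorname{ric}}(e_s,e_r)=-\frac12\langle\phi_s,\phi_r\rangle-\frac12\operatorname{Tr}(\phi_s\circ\phi_r)$, where $\operatorname{ad}v$ denotes the adjoint action of $v$ on $\mathfrak g$, and for endomorphisms $f,g$ of $\mathfrak g$, $\langle f,g\rangle=\sum_i\eta_i\langle f(u_i),g(u_i)\rangle$ for any orthonormal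 basis $u_i$ of $\mathfrak g$ with $\langle u_i,u_i\rangle=\eta_i=\pm1$.
   Context: A metric on a Lie algebra is a nondegenerate symmetric bilinear form, possibly indefinite; the Ricci tensor is that of the corresponding left-invariant pseudo-Riemannian metric on the simply connected Lie group, evaluated at the identity. A standard decomposition of a metric Lie algebra $\tilde{\mathfrak g}$ is a decomposition $\tilde{\mathfrak g}=\mathfrak g\oplus^\perp\mathfrak a$ as an orthogonal direct sum of vector spaces, where $\mathfrak g$ is a nilpotent ideal and $\mathfrak a$ is an abelian subalgebra. *)

theory Defs
  imports "HOL-Analysis.Analysis"
begin

text \<open>A (finite-dimensional real) Lie algebra: the underlying space is a Euclidean space
type 'a (used only as a finite-dimensional real vector space; its inner product plays
no role), with a bilinear alternating bracket satisfying the Jacobi identity.\<close>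

definition lie_algebra :: "('a::euclidean_space \<Rightarrow> 'a \<Rightarrow> 'a) \<Rightarrow> bool" where
  "lie_algebra br \<longleftrightarrow> bilinear br \<and> (\<forall>x. br x x = 0) \<and>
     (\<forall>x y z. br x (br y z) + br y (br z x) + br z (br x y) = 0)"

definition metric :: "('a::euclidean_space \<Rightarrow> 'a \<Rightarrow> real) \<Rightarrow> bool" where
  "metric B \<longleftrightarrow> bilinear B \<and> (\<forall>x y. B x y = B y x) \<and>
     (\<forall>x. (\<forall>y. B x y = 0) \<longrightarrow> x = 0)"

definition bracket_span :: "('a::euclidean_space \<Rightarrow> 'a \<Rightarrow> 'a) \<Rightarrow> 'a set \<Rightarrow> 'a set \<Rightarrow> 'a set" where
  "bracket_span br S T = span {br x y | x y. x \<in> S \<and> y \<in> T}"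

fun derived_series :: "('a::euclidean_space \<Rightarrow> 'a \<Rightarrow> 'a) \<Rightarrow> nat \<Rightarrow> 'a set" where
  "derived_series br 0 = UNIV"
| "derived_series br (Suc n) = bracket_span br (derived_series br n) (derived_series br n)"

definition solvable :: "('a::euclidean_space \<Rightarrow> 'a \<Rightarrow> 'a) \<Rightarrow> bool" where
  "solvable br \<longleftrightarrow> (\<exists>n. derived_series br n = {0})"

fun lower_central :: "('a::euclidean_space \<Rightarrow> 'a \<Rightarrow> 'a) \<Rightarrow> 'a set \<Rightarrow> nat \<Rightarrow> 'a set" where
  "lower_central br g 0 = g"
| "lower_central br g (Suc n) = bracket_span br g (lower_central br g n)"

definition lie_ideal :: "('a::euclidean_space \<Rightarrow> 'a \<Rightarrow> 'a) \<Rightarrow> 'a set \<Rightarrow> bool" where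
  "lie_ideal br g \<longleftrightarrow> subspace g \<and> (\<forall>x\<in>g. \<forall>y. br x y \<in> g \<and> br y x \<in> g)"

definition nilpotent_sub :: "('a::euclidean_space \<Rightarrow> 'a \<Rightarrow> 'a) \<Rightarrow> 'a set \<Rightarrow> bool" where
  "nilpotent_sub br g \<longleftrightarrow> (\<exists>n. lower_central br g n = {0})"

definition abelian_subalgebra :: "('a::euclidean_space \<Rightarrow> 'a \<Rightarrow> 'a) \<Rightarrow> 'a set \<Rightarrow> bool" where
  "abelian_subalgebra br a \<longleftrightarrow> subspace a \<and> (\<forall>x\<in>a. \<forall>y\<in>a. br x y = 0)"

definition standard_decomposition ::
  "('a::euclidean_space \<Rightarrow> 'a \<Rightarrow> 'a) \<Rightarrow> ('a \<Rightarrow> 'a \<Rightarrow> real) \<Rightarrow> 'a set \<Rightarrow> 'a set \<Rightarrow> bool" where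
  "standard_decomposition br B g a \<longleftrightarrow>
     lie_ideal br g \<and> nilpotent_sub br g \<and> abelian_subalgebra br a \<and>
     g \<inter> a = {0} \<and> (\<forall>v. \<exists>x\<in>g. \<exists>y\<in>a. v = x + y) \<and>
     (\<forall>x\<in>g. \<forall>y\<in>a. B x y = 0)"

text \<open>Levi-Civita connection of the left-invariant metric on the subalgebra S with the
restricted metric (Koszul formula).\<close>
definition levi_civita ::
  "('a::euclidean_space \<Rightarrow> 'a \<Rightarrow> 'a) \<Rightarrow> ('a \<Rightarrow> 'a \<Rightarrow> real) \<Rightarrow> 'a set \<Rightarrow> 'a \<Rightarrow> 'a \<Rightarrow> 'a" where
  "levi_civita br B S X Y = (THE Z. Z \<in> S \<and>
     (\<forall>W\<in>S. 2 * B Z W = B (br X Y) W - B (br Y W) X + B (br W X) Y))"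

definition curvature ::
  "('a::euclidean_space \<Rightarrow> 'a \<Rightarrow> 'a) \<Rightarrow> ('a \<Rightarrow> 'a \<Rightarrow> real) \<Rightarrow> 'a set \<Rightarrow> 'a \<Rightarrow> 'a \<Rightarrow> 'a \<Rightarrow> 'a" where
  "curvature br B S X Y Z =
     levi_civita br B S X (levi_civita br B S Y Z) - levi_civita br B S Y (levi_civita br B S X Z)
     - levi_civita br B S (br X Y) Z"

definition trace_on :: "'a::euclidean_space set \<Rightarrow> ('a \<Rightarrow> 'a) \<Rightarrow> real" where
  "trace_on S f = (let Bs = (SOME Bs. independent Bs \<and> span Bs = S)
                    in \<Sum>b\<in>Bs. representation Bs (f b) b)"

definition ricci ::
  "('a::euclidean_space \<Rightarrow> 'a \<Rightarrow> 'a) \<Rightarrow> ('a \<Rightarrow> 'a \<Rightarrow> real) \<Rightarrow> 'a set \<Rightarrow> 'a \<Rightarrow> 'a \<Rightarrow> real" where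
  "ricci br B S X Y = trace_on S (\<lambda>Z. curvature br B S Z X Y)"

definition adjoint_on :: "('a::euclidean_space \<Rightarrow> 'a \<Rightarrow> real) \<Rightarrow> 'a set \<Rightarrow> ('a \<Rightarrow> 'a) \<Rightarrow> 'a \<Rightarrow> 'a" where
  "adjoint_on B S f v = (THE u. u \<in> S \<and> (\<forall>w\<in>S. B u w = B v (f w)))"

definition orthonormal_basis ::
  "('a::euclidean_space \<Rightarrow> 'a \<Rightarrow> real) \<Rightarrow> 'a set \<Rightarrow> nat \<Rightarrow> (nat \<Rightarrow> 'a) \<Rightarrow> (nat \<Rightarrow> real) \<Rightarrow> bool" where
  "orthonormal_basis B S m u eta \<longleftrightarrow>
     (\<forall>i<m. u i \<in> S \<and> (eta i = 1 \<or> eta i = -1)) \<and>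
     (\<forall>i<m. \<forall>j<m. B (u i) (u j) = (if i = j then eta i else 0)) \<and>
     span (u ` {..<m}) = S"

definition endo_inner ::
  "('a::euclidean_space \<Rightarrow> 'a \<Rightarrow> real) \<Rightarrow> nat \<Rightarrow> (nat \<Rightarrow> 'a) \<Rightarrow> (nat \<Rightarrow> real) \<Rightarrow> ('a \<Rightarrow> 'a) \<Rightarrow> ('a \<Rightarrow> 'a) \<Rightarrow> real" where
  "endo_inner B m u eta f g = (\<Sum>i<m. eta i * B (f (u i)) (g (u i)))"

end

theory Submission
  imports Defs
begin

text \<open>All three formulas come from the Koszul formula evaluated in the orthonormal frame
  \<open>(u, e)\<close> of \<open>g \<oplus> a\<close>, the Ricci tensor being the frame sum of \<open>\<langle>R(Z,X)Y, Z\<rangle>\<close>.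
  In this frame the Levi-Civita connection of \<open>g \<oplus> a\<close> is expressed through that of \<open>g\<close> and
  the derivations \<open>\<phi>\<^sub>s\<close>: \<open>\<nabla>\<^sub>v e\<^sub>s = (\<phi>\<^sub>s + \<phi>\<^sub>s\<^sup>*) v / 2\<close>,
  \<open>\<nabla>\<^bsub>e\<^sub>s\<^esub> v = (\<phi>\<^sub>s\<^sup>* - \<phi>\<^sub>s) v / 2\<close>, \<open>\<nabla>\<^bsub>e\<^sub>s\<^esub> e\<^sub>r = 0\<close>, and \<open>\<nabla>\<^sub>v w\<close> differs from
  \<open>\<nabla>\<^sup>g\<^sub>v w\<close> only by an \<open>a\<close>-component. The traces of \<open>ad z\<close>, \<open>ad v \<circ> \<phi>\<^sub>s\<close> and
  \<open>\<phi>\<^sub>s \<circ> ad v\<close> that appear along the way vanish, because these maps push each term of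
  the lower central series of the nilpotent ideal \<open>g\<close> into the next one.\<close>

locale symmetric_bilinear_form =
  fixes B :: "'a::euclidean_space \<Rightarrow> 'a \<Rightarrow> real"
  assumes bilinear: "bilinear B" and symmetric: "B x y = B y x"
begin

lemma linear_left: "linear (\<lambda>x. B x y)" and linear_right: "linear (B x)"
  using bilinear by (simp_all add: bilinear_def)

lemma form_simps [simp]:
  "B (x + y) z = B x z + B y z" "B z (x + y) = B z x + B z y"
  "B (x - y) z = B x z - B y z" "B z (x - y) = B z x - B z y"
  "B (- x) z = - B x z" "B z (- x) = - B z x"
  "B (c *\<^sub>R x) z = c * B x z" "B z (c *\<^sub>R x) = c * B z x"
  "B 0 z = 0" "B z 0 = 0"
  using bilinear_ladd[OF bilinear] bilinear_radd[OF bilinear] bilinear_lsub[OF bilinear]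
    bilinear_rsub[OF bilinear] bilinear_lneg[OF bilinear] bilinear_rneg[OF bilinear]
    bilinear_lmul[OF bilinear] bilinear_rmul[OF bilinear]
    bilinear_lzero[OF bilinear] bilinear_rzero[OF bilinear]
  by simp_all

lemma sum_left: "B (sum f A) z = (\<Sum>i\<in>A. B (f i) z)"
  using real_vector.linear_sum[OF linear_left[of z], of f A] by simp

end

locale orthonormal_frame = symmetric_bilinear_form B
  for B :: "'a::euclidean_space \<Rightarrow> 'a \<Rightarrow> real" +
  fixes S :: "'a set" and I :: "'i set" and w :: "'i \<Rightarrow> 'a" and \<sigma> :: "'i \<Rightarrow> real"
  assumes finite_index: "finite I"
    and sign_square: "i \<in> I \<Longrightarrow> \<sigma> i * \<sigma> i = 1"
    and orthonormal: "i \<in> I \<Longrightarrow> j \<in> I \<Longrightarrow> B (w i) (w j) = (if i = j then \<sigma> i else 0)"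
    and span_frame: "span (w ` I) = S"
begin

lemma frame_mem: "i \<in> I \<Longrightarrow> w i \<in> S"
  using span_frame real_vector.span_base[of "w i" "w ` I"] by simp

lemma subspace: "subspace S"
  using span_frame real_vector.subspace_span by blast

lemma expansion:
  assumes "x \<in> S"
  shows "x = (\<Sum>i\<in>I. (\<sigma> i * B x (w i)) *\<^sub>R w i)"
proof -
  define E where "E x = (\<Sum>i\<in>I. (\<sigma> i * B x (w i)) *\<^sub>R w i) - x" for x
  have "linear E"
    unfolding E_def
    by (rule linearI) (simp_all add: distrib_left scaleR_add_left sum.distrib scaleR_sum_right algebra_simps)
  then have "subspace {x. E x = 0}"
    by (rule real_vector.linear_subspace_kernel)
  moreover have "E (w j) = 0" if "j \<in> I" for j
  proof -
    have "(\<Sum>i\<in>I. (\<sigma> i * B (w j) (w i)) *\<^sub>R w i) = (\<Sum>i\<in>I. if i = j then w j else 0)"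
      by (rule sum.cong) (use that in \<open>auto simp: orthonormal sign_square\<close>)
    then show ?thesis
      using that finite_index by (simp add: E_def)
  qed
  ultimately have "E x = 0"
    using real_vector.span_induct[of x "w ` I" "\<lambda>x. E x = 0"] assms span_frame by auto
  then show ?thesis
    by (simp add: E_def)
qed

lemma eqI:
  assumes "x \<in> S" "y \<in> S" "\<And>i. i \<in> I \<Longrightarrow> B x (w i) = B y (w i)"
  shows "x = y"
  using expansion[OF assms(1)] expansion[OF assms(2)] assms(3)
  by (metis (no_types, lifting) sum.cong)

lemma parseval:
  assumes "x \<in> S"
  shows "B x y = (\<Sum>i\<in>I. \<sigma> i * B x (w i) * B (w i) y)"
proof -
  from expansion[OF assms] have "B x y = B (\<Sum>i\<in>I. (\<sigma> i * B x (w i)) *\<^sub>R w i) y"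
    by (rule arg_cong[where f = "\<lambda>x. B x y"])
  then show ?thesis
    by (simp add: sum_left)
qed

lemma ex1_representing_vector:
  assumes f: "linear f"
  shows "\<exists>!z. z \<in> S \<and> (\<forall>W\<in>S. B z W = f W)"
proof -
  define z where "z = (\<Sum>i\<in>I. (\<sigma> i * f (w i)) *\<^sub>R w i)"
  have z_mem: "z \<in> S"
    unfolding z_def
    by (intro real_vector.subspace_sum[OF subspace] real_vector.subspace_scale[OF subspace] frame_mem)
  have z_represents: "B z W = f W" if W: "W \<in> S" for W
  proof -
    from expansion[OF W] have "f W = f (\<Sum>i\<in>I. (\<sigma> i * B W (w i)) *\<^sub>R w i)"
      by (rule arg_cong)
    also have "\<dots> = (\<Sum>i\<in>I. \<sigma> i * B W (w i) * f (w i))"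
      by (simp add: real_vector.linear_sum[OF f] real_vector.linear_scale[OF f])
    also have "\<dots> = B z W"
      by (simp add: z_def sum_left symmetric[of "w _" W] mult_ac)
    finally show ?thesis
      by simp
  qed
  show ?thesis
  proof (rule ex1I[of _ z])
    show "z \<in> S \<and> (\<forall>W\<in>S. B z W = f W)"
      using z_mem z_represents by blast
  next
    fix z' assume "z' \<in> S \<and> (\<forall>W\<in>S. B z' W = f W)"
    then show "z' = z"
      using z_mem z_represents by (intro eqI) (auto simp: frame_mem)
  qed
qed

lemma
  assumes "linear f"
  shows adjoint_on_mem: "adjoint_on B S f v \<in> S"
    and adjoint_on_eq: "W \<in> S \<Longrightarrow> B (adjoint_on B S f v) W = B v (f W)"
proof -
  have "linear (\<lambda>W. B v (f W))"
    using linear_compose[OF assms linear_right] by (simp add: o_def)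
  from theI'[OF ex1_representing_vector[OF this]]
  show "adjoint_on B S f v \<in> S" "W \<in> S \<Longrightarrow> B (adjoint_on B S f v) W = B v (f W)"
    unfolding adjoint_on_def by auto
qed

lemma linear_adjoint_on:
  assumes f: "linear f"
  shows "linear (adjoint_on B S f)"
proof (rule linearI)
  fix x y
  show "adjoint_on B S f (x + y) = adjoint_on B S f x + adjoint_on B S f y"
    by (rule eqI)
      (simp_all add: adjoint_on_mem[OF f] adjoint_on_eq[OF f] frame_mem real_vector.subspace_add[OF subspace])
next
  fix c x
  show "adjoint_on B S f (c *\<^sub>R x) = c *\<^sub>R adjoint_on B S f x"
    by (rule eqI)
      (simp_all add: adjoint_on_mem[OF f] adjoint_on_eq[OF f] frame_mem real_vector.subspace_scale[OF subspace])
qed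

lemma basis_trace_eq_frame_trace:
  assumes f: "linear f" "\<And>x. x \<in> S \<Longrightarrow> f x \<in> S"
    and basis: "independent Bs" "span Bs = S"
  shows "(\<Sum>b\<in>Bs. representation Bs (f b) b) = (\<Sum>i\<in>I. \<sigma> i * B (f (w i)) (w i))"
proof -
  have w_span: "w i \<in> span Bs" if "i \<in> I" for i
    using that frame_mem basis(2) by simp
  have "representation Bs (f b) b = (\<Sum>i\<in>I. \<sigma> i * B (f b) (w i) * representation Bs (w i) b)"
    if b: "b \<in> Bs" for b
  proof -
    have "f b \<in> S"
      using b basis(2) f(2) real_vector.span_base by blast
    from expansion[OF this]
    have "representation Bs (f b) b = representation Bs (\<Sum>i\<in>I. (\<sigma> i * B (f b) (w i)) *\<^sub>R w i) b"
      by (rule arg_cong[where f = "\<lambda>x. representation Bs x b"])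
    also have "\<dots> = (\<Sum>i\<in>I. \<sigma> i * B (f b) (w i) * representation Bs (w i) b)"
      using w_span basis(1)
      by (simp add: real_vector.representation_sum real_vector.representation_scale real_vector.span_scale)
    finally show ?thesis .
  qed
  then have "(\<Sum>b\<in>Bs. representation Bs (f b) b)
      = (\<Sum>b\<in>Bs. \<Sum>i\<in>I. \<sigma> i * B (f b) (w i) * representation Bs (w i) b)"
    by simp
  also have "\<dots> = (\<Sum>i\<in>I. \<Sum>b\<in>Bs. \<sigma> i * B (f b) (w i) * representation Bs (w i) b)"
    by (rule sum.swap)
  also have "\<dots> = (\<Sum>i\<in>I. \<sigma> i * B (f (w i)) (w i))"
  proof (rule sum.cong[OF refl])
    fix i assume i: "i \<in> I"
    have "w i = (\<Sum>b\<in>Bs. representation Bs (w i) b *\<^sub>R b)"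
      using real_vector.sum_representation_eq[OF basis(1) w_span[OF i]
          eucl.finiteI_independent[OF basis(1)] order_refl] by simp
    then have "f (w i) = f (\<Sum>b\<in>Bs. representation Bs (w i) b *\<^sub>R b)"
      by (rule arg_cong)
    also have "\<dots> = (\<Sum>b\<in>Bs. representation Bs (w i) b *\<^sub>R f b)"
      by (simp add: real_vector.linear_sum[OF f(1)] real_vector.linear_scale[OF f(1)])
    finally show "(\<Sum>b\<in>Bs. \<sigma> i * B (f b) (w i) * representation Bs (w i) b) = \<sigma> i * B (f (w i)) (w i)"
      by (simp add: sum_left sum_distrib_left mult_ac)
  qed
  finally show ?thesis .
qed

lemma trace_on_frame:
  assumes "linear f" "\<And>x. x \<in> S \<Longrightarrow> f x \<in> S"
  shows "trace_on S f = (\<Sum>i\<in>I. \<sigma> i * B (f (w i)) (w i))"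
proof -
  obtain Bs where "Bs \<subseteq> S" "independent Bs" "S \<subseteq> span Bs"
    using real_vector.maximal_independent_subset[of S] by blast
  then have "independent Bs \<and> span Bs = S"
    using real_vector.span_minimal[OF _ subspace] by blast
  then have "independent (SOME Bs. independent Bs \<and> span Bs = S) \<and> span (SOME Bs. independent Bs \<and> span Bs = S) = S"
    by (rule someI[where P = "\<lambda>Bs. independent Bs \<and> span Bs = S"])
  then show ?thesis
    unfolding trace_on_def Let_def using basis_trace_eq_frame_trace[OF assms] by simp
qed

lemma trace_on_comp_commute:
  assumes f: "linear f" "\<And>x. x \<in> S \<Longrightarrow> f x \<in> S" and h: "linear h" "\<And>x. x \<in> S \<Longrightarrow> h x \<in> S"
  shows "trace_on S (f \<circ> h) = trace_on S (h \<circ> f)"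
proof -
  have double_sum: "(\<Sum>i\<in>I. \<sigma> i * B (p (q (w i))) (w i))
      = (\<Sum>i\<in>I. \<Sum>j\<in>I. \<sigma> i * \<sigma> j * B (q (w i)) (w j) * B (p (w j)) (w i))"
    if p: "linear p" and q: "\<And>x. x \<in> S \<Longrightarrow> q x \<in> S" for p q
  proof (rule sum.cong[OF refl])
    fix i assume "i \<in> I"
    from expansion[OF q[OF frame_mem[OF this]]]
    have "p (q (w i)) = p (\<Sum>j\<in>I. (\<sigma> j * B (q (w i)) (w j)) *\<^sub>R w j)"
      by (rule arg_cong)
    also have "\<dots> = (\<Sum>j\<in>I. (\<sigma> j * B (q (w i)) (w j)) *\<^sub>R p (w j))"
      by (simp add: real_vector.linear_sum[OF p] real_vector.linear_scale[OF p])
    finally show "\<sigma> i * B (p (q (w i))) (w i)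
        = (\<Sum>j\<in>I. \<sigma> i * \<sigma> j * B (q (w i)) (w j) * B (p (w j)) (w i))"
      by (simp add: sum_left sum_distrib_left mult_ac)
  qed
  have "trace_on S (f \<circ> h) = (\<Sum>i\<in>I. \<Sum>j\<in>I. \<sigma> i * \<sigma> j * B (h (w i)) (w j) * B (f (w j)) (w i))"
    using trace_on_frame[of "f \<circ> h"] double_sum[of f h, OF f(1) h(2)] linear_compose[OF h(1) f(1)] f(2) h(2)
    by simp
  also have "\<dots> = (\<Sum>j\<in>I. \<Sum>i\<in>I. \<sigma> j * \<sigma> i * B (f (w j)) (w i) * B (h (w i)) (w j))"
    by (subst sum.swap) (simp add: mult_ac)
  also have "\<dots> = trace_on S (h \<circ> f)"
    using trace_on_frame[of "h \<circ> f"] double_sum[of h f, OF h(1) f(2)] linear_compose[OF f(1) h(1)] f(2) h(2)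
    by simp
  finally show ?thesis .
qed

lemma trace_on_comp_adjoint:
  assumes f: "linear f" and h: "linear h" "\<And>x. x \<in> S \<Longrightarrow> h x \<in> S"
  shows "trace_on S (h \<circ> adjoint_on B S f) = (\<Sum>i\<in>I. \<sigma> i * B (h (w i)) (f (w i)))"
proof -
  have "trace_on S (h \<circ> adjoint_on B S f) = trace_on S (adjoint_on B S f \<circ> h)"
    using trace_on_comp_commute h linear_adjoint_on[OF f] adjoint_on_mem[OF f] by blast
  also have "\<dots> = (\<Sum>i\<in>I. \<sigma> i * B (adjoint_on B S f (h (w i))) (w i))"
    using trace_on_frame linear_compose[OF h(1) linear_adjoint_on[OF f]] adjoint_on_mem[OF f]
    by simp
  also have "\<dots> = (\<Sum>i\<in>I. \<sigma> i * B (h (w i)) (f (w i)))"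
    by (simp add: adjoint_on_eq[OF f] frame_mem)
  finally show ?thesis .
qed

end

lemma exists_basis_adapted_to_filtration:
  fixes F :: "nat \<Rightarrow> 'a::euclidean_space set"
  assumes sub: "\<And>j. subspace (F j)" and dec: "\<And>j. F (Suc j) \<subseteq> F j" and zero: "F n = {0}"
  shows "\<exists>Bs. independent Bs \<and> span Bs = F 0 \<and> (\<forall>i. F i \<subseteq> span (Bs \<inter> F i))"
proof -
  have "\<exists>Bs. independent Bs \<and> span Bs = F j \<and> (\<forall>i\<ge>j. F i \<subseteq> span (Bs \<inter> F i))" if "j \<le> n" for j
    using that
  proof (induction rule: inc_induct)
    case base
    have "F i \<subseteq> {0}" if "n \<le> i" for i
      using lift_Suc_antimono_le[of F, OF dec that] zero by simp
    then show ?case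
      using zero by (intro exI[of _ "{}"]) (auto simp: real_vector.independent_empty)
  next
    case (step j)
    then obtain Bs where Bs: "independent Bs" "span Bs = F (Suc j)"
      "\<forall>i\<ge>Suc j. F i \<subseteq> span (Bs \<inter> F i)" by blast
    have "Bs \<subseteq> F j"
      using Bs(2) dec[of j] real_vector.span_superset by blast
    then obtain C where C: "Bs \<subseteq> C" "C \<subseteq> F j" "independent C" "F j \<subseteq> span C"
      using real_vector.maximal_independent_subset_extend[OF _ Bs(1)] by metis
    have "span C = F j"
      using C real_vector.span_minimal[OF C(2) sub] by auto
    moreover have "F i \<subseteq> span (C \<inter> F i)" if "j \<le> i" for i
    proof (cases "i = j")
      case True
      then show ?thesis using C by (simp add: Int_absorb2)
    next
      case False
      with that Bs(3) have "F i \<subseteq> span (Bs \<inter> F i)" by simp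
      also have "\<dots> \<subseteq> span (C \<inter> F i)"
        using C(1) by (intro real_vector.span_mono) auto
      finally show ?thesis .
    qed
    ultimately show ?case
      using C(3) by blast
  qed
  from this[of 0] show ?thesis
    by simp
qed

lemma basis_trace_eq_0_if_lowers_filtration:
  fixes F :: "nat \<Rightarrow> 'a::euclidean_space set"
  assumes "\<And>j. subspace (F j)" "\<And>j. F (Suc j) \<subseteq> F j" "F n = {0}"
    and lowers: "\<And>j x. x \<in> F j \<Longrightarrow> f x \<in> F (Suc j)"
  shows "\<exists>Bs. independent Bs \<and> span Bs = F 0 \<and> (\<Sum>b\<in>Bs. representation Bs (f b) b) = 0"
proof -
  obtain Bs where Bs: "independent Bs" "span Bs = F 0" "\<forall>i. F i \<subseteq> span (Bs \<inter> F i)"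
    using exists_basis_adapted_to_filtration[OF assms(1-3)] by blast
  have "representation Bs (f b) b = 0" if b: "b \<in> Bs" for b
  proof -
    have "b \<noteq> 0"
      using Bs(1) b real_vector.dependent_zero by blast
    moreover have "b \<in> F 0"
      using Bs(2) real_vector.span_base[OF b] by simp
    ultimately obtain j where j: "b \<in> F j" "b \<notin> F (Suc j)"
      using ex_least_nat_less[of "\<lambda>j. b \<notin> F j" n] \<open>F n = {0}\<close> by auto
    have "f b \<in> span (Bs \<inter> F (Suc j))"
      using lowers[OF j(1)] Bs(3) by blast
    then have "representation Bs (f b) = representation (Bs \<inter> F (Suc j)) (f b)"
      using real_vector.representation_extend[OF Bs(1)] by blast
    moreover have "representation (Bs \<inter> F (Suc j)) (f b) b = 0"
      using real_vector.representation_ne_zero j(2) by blast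
    ultimately show ?thesis
      by simp
  qed
  then show ?thesis
    using Bs by (intro exI[of _ Bs]) simp
qed

context orthonormal_frame
begin

lemma trace_on_eq_0_if_lowers_filtration:
  fixes F :: "nat \<Rightarrow> 'a set"
  assumes f: "linear f"
    and F: "\<And>j. subspace (F j)" "\<And>j. F (Suc j) \<subseteq> F j" "F 0 = S" "F n = {0}"
    and lowers: "\<And>j x. x \<in> F j \<Longrightarrow> f x \<in> F (Suc j)"
  shows "trace_on S f = 0"
proof -
  obtain Bs where Bs: "independent Bs" "span Bs = S" "(\<Sum>b\<in>Bs. representation Bs (f b) b) = 0"
    using basis_trace_eq_0_if_lowers_filtration[where f = f, OF F(1,2,4) lowers] F(3) by auto
  have f_S: "f x \<in> S" if "x \<in> S" for x
    using lowers[of x 0] F(2)[of 0] F(3) that by blast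
  show ?thesis
    using trace_on_frame[OF f f_S] basis_trace_eq_frame_trace[OF f f_S Bs(1,2)] Bs(3) by simp
qed

end

locale bracket_form = symmetric_bilinear_form B
  for B :: "'a::euclidean_space \<Rightarrow> 'a \<Rightarrow> real" +
  fixes br :: "'a \<Rightarrow> 'a \<Rightarrow> 'a"
  assumes bracket_bilinear: "bilinear br" and bracket_alternating: "br x x = 0"
begin

lemma linear_bracket_left: "linear (\<lambda>x. br x y)" and linear_bracket_right: "linear (br x)"
  using bracket_bilinear by (simp_all add: bilinear_def)

lemma bracket_simps [simp]:
  "br (x + y) z = br x z + br y z" "br z (x + y) = br z x + br z y"
  "br (x - y) z = br x z - br y z" "br z (x - y) = br z x - br z y"
  "br (- x) z = - br x z" "br z (- x) = - br z x"
  "br (c *\<^sub>R x) z = c *\<^sub>R br x z" "br z (c *\<^sub>R x) = c *\<^sub>R br z x"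
  "br 0 z = 0" "br z 0 = 0"
  using bilinear_ladd[OF bracket_bilinear] bilinear_radd[OF bracket_bilinear]
    bilinear_lsub[OF bracket_bilinear] bilinear_rsub[OF bracket_bilinear]
    bilinear_lneg[OF bracket_bilinear] bilinear_rneg[OF bracket_bilinear]
    bilinear_lmul[OF bracket_bilinear] bilinear_rmul[OF bracket_bilinear]
    bilinear_lzero[OF bracket_bilinear] bilinear_rzero[OF bracket_bilinear]
  by simp_all

lemma bracket_sum_left: "br (sum f A) z = (\<Sum>i\<in>A. br (f i) z)"
  using real_vector.linear_sum[OF linear_bracket_left[of z], of f A] by simp

lemma bracket_antisym: "br y x = - br x y"
proof -
  have "br (x + y) (x + y) = br x x + br x y + (br y x + br y y)"
    by (simp only: bracket_simps(1,2) add_ac)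
  then have "br x y + br y x = 0"
    by (simp add: bracket_alternating)
  then show ?thesis
    by (simp add: eq_neg_iff_add_eq_0 add.commute)
qed

definition koszul :: "'a \<Rightarrow> 'a \<Rightarrow> 'a \<Rightarrow> real" where
  "koszul X Y W = B (br X Y) W - B (br Y W) X + B (br W X) Y"

lemma koszul_self: "koszul X Y X = 2 * B (br X Y) X"
  by (simp add: koszul_def bracket_antisym[of Y X] bracket_alternating)

lemma koszul_zero_middle [simp]: "koszul X 0 W = 0"
  by (simp add: koszul_def)

lemma koszul_neg_left [simp]: "koszul (- X) Y W = - koszul X Y W"
  by (simp add: koszul_def)

lemma koszul_diff_middle: "koszul X (Y - Y') W = koszul X Y W - koszul X Y' W"
  by (simp add: koszul_def)

lemma koszul_sum_middle: "koszul X (\<Sum>i\<in>A. c i *\<^sub>R Y i) W = (\<Sum>i\<in>A. c i * koszul X (Y i) W)"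
proof -
  have lin: "linear (\<lambda>Y. koszul X Y W)"
    by (rule linearI) (simp_all add: koszul_def algebra_simps)
  show ?thesis
    using real_vector.linear_sum[OF lin, of "\<lambda>i. c i *\<^sub>R Y i" A] real_vector.linear_scale[OF lin]
    by simp
qed

end

locale bracket_frame = bracket_form B br + orthonormal_frame B S I w \<sigma>
  for B br S I w \<sigma>
begin

lemma
  shows levi_civita_mem: "levi_civita br B S X Y \<in> S"
    and levi_civita_koszul: "W \<in> S \<Longrightarrow> B (levi_civita br B S X Y) W = koszul X Y W / 2"
proof -
  have "linear (\<lambda>W. koszul X Y W / 2)"
    by (rule linearI) (simp_all add: koszul_def field_simps)
  then have "\<exists>!Z. Z \<in> S \<and> (\<forall>W\<in>S. B Z W = koszul X Y W / 2)"
    by (rule ex1_representing_vector)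
  then have "\<exists>!Z. Z \<in> S \<and> (\<forall>W\<in>S. 2 * B Z W = B (br X Y) W - B (br Y W) X + B (br W X) Y)"
    by (simp add: koszul_def field_simps)
  from theI'[OF this]
  show "levi_civita br B S X Y \<in> S" "W \<in> S \<Longrightarrow> B (levi_civita br B S X Y) W = koszul X Y W / 2"
    unfolding levi_civita_def koszul_def by auto
qed

lemma levi_civita_eqI:
  assumes "Z \<in> S" "\<And>i. i \<in> I \<Longrightarrow> B Z (w i) = koszul X Y (w i) / 2"
  shows "levi_civita br B S X Y = Z"
  using assms by (intro eqI levi_civita_mem) (auto simp: levi_civita_koszul frame_mem)

lemma bilinear_levi_civita: "bilinear (levi_civita br B S)"
  unfolding bilinear_def
  by (intro conjI allI linearI levi_civita_eqI)
    (simp_all add: levi_civita_mem levi_civita_koszul frame_mem koszul_def field_simps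
      real_vector.subspace_add[OF subspace] real_vector.subspace_scale[OF subspace])

lemma curvature_mem: "curvature br B S Z X Y \<in> S"
  unfolding curvature_def by (intro real_vector.subspace_diff[OF subspace] levi_civita_mem)

lemma linear_curvature: "linear (\<lambda>Z. curvature br B S Z X Y)"
  by (rule linearI)
    (simp_all add: curvature_def bilinear_ladd[OF bilinear_levi_civita] bilinear_radd[OF bilinear_levi_civita]
      bilinear_lmul[OF bilinear_levi_civita] bilinear_rmul[OF bilinear_levi_civita] algebra_simps)

lemma curvature_koszul:
  assumes "W \<in> S"
  shows "B (curvature br B S Z X Y) W = (koszul Z (levi_civita br B S X Y) W
    - koszul X (levi_civita br B S Z Y) W - koszul (br Z X) Y W) / 2"
  using assms by (simp add: curvature_def levi_civita_koszul diff_divide_distrib)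

lemma ricci_on_frame: "ricci br B S X Y = (\<Sum>i\<in>I. \<sigma> i * B (curvature br B S (w i) X Y) (w i))"
  unfolding ricci_def by (rule trace_on_frame[OF linear_curvature curvature_mem])

lemma frame_sum_bracket_adjoint:
  assumes f: "linear f" "\<And>x. x \<in> S \<Longrightarrow> f x \<in> S"
  shows "(\<Sum>i\<in>I. \<sigma> i * B (br (adjoint_on B S f (w i)) (w i)) v)
    = - (\<Sum>i\<in>I. \<sigma> i * B (br (f (w i)) (w i)) v)"
proof -
  have bracket_expansion: "B (br x y) v = (\<Sum>j\<in>I. \<sigma> j * B x (w j) * B (br (w j) y) v)"
    if "x \<in> S" for x y
  proof -
    from expansion[OF that] have "B (br x y) v = B (br (\<Sum>j\<in>I. (\<sigma> j * B x (w j)) *\<^sub>R w j) y) v"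
      by (rule arg_cong[where f = "\<lambda>x. B (br x y) v"])
    then show ?thesis
      by (simp add: bracket_sum_left sum_left)
  qed
  define c where "c i j = \<sigma> i * \<sigma> j * B (f (w i)) (w j)" for i j
  have "(\<Sum>i\<in>I. \<sigma> i * B (br (f (w i)) (w i)) v) = (\<Sum>i\<in>I. \<Sum>j\<in>I. c i j * B (br (w j) (w i)) v)"
  proof (intro sum.cong refl)
    fix i assume "i \<in> I"
    then show "\<sigma> i * B (br (f (w i)) (w i)) v = (\<Sum>j\<in>I. c i j * B (br (w j) (w i)) v)"
      by (simp add: bracket_expansion[OF f(2)[OF frame_mem]] c_def sum_distrib_left mult_ac)
  qed
  moreover have "(\<Sum>i\<in>I. \<sigma> i * B (br (adjoint_on B S f (w i)) (w i)) v)
      = (\<Sum>i\<in>I. \<Sum>j\<in>I. c j i * B (br (w j) (w i)) v)"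
  proof (intro sum.cong refl)
    fix i assume "i \<in> I"
    then show "\<sigma> i * B (br (adjoint_on B S f (w i)) (w i)) v = (\<Sum>j\<in>I. c j i * B (br (w j) (w i)) v)"
      by (simp add: bracket_expansion[OF adjoint_on_mem[OF f(1)]] adjoint_on_eq[OF f(1)] frame_mem
          c_def sum_distrib_left symmetric[of "w i"] mult_ac)
  qed
  moreover have "(\<Sum>i\<in>I. \<Sum>j\<in>I. c j i * B (br (w j) (w i)) v) = (\<Sum>i\<in>I. \<Sum>j\<in>I. c i j * B (br (w i) (w j)) v)"
    by (rule sum.swap)
  moreover have "(\<Sum>i\<in>I. \<Sum>j\<in>I. c i j * B (br (w i) (w j)) v)
      = (\<Sum>i\<in>I. \<Sum>j\<in>I. - (c i j * B (br (w j) (w i)) v))"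
    by (intro sum.cong refl) (metis bracket_antisym form_simps(5) mult_minus_right)
  ultimately show ?thesis
    by (simp add: sum_negf)
qed

end

locale standard_decomposition_frames = bracket_form B br
  for B :: "'a::euclidean_space \<Rightarrow> 'a \<Rightarrow> real" and br +
  fixes g a :: "'a set" and k m :: nat and e u :: "nat \<Rightarrow> 'a" and eps eta :: "nat \<Rightarrow> real"
  assumes jacobi: "br x (br y z) + br y (br z x) + br z (br x y) = 0"
    and decomposition: "standard_decomposition br B g a"
    and frame_a: "orthonormal_basis B a k e eps"
    and frame_g: "orthonormal_basis B g m u eta"
begin

lemma bracket_mem_g: "x \<in> g \<Longrightarrow> br x y \<in> g" "x \<in> g \<Longrightarrow> br y x \<in> g"
  using decomposition by (simp_all add: standard_decomposition_def lie_ideal_def)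

lemma bracket_a_a: "x \<in> a \<Longrightarrow> y \<in> a \<Longrightarrow> br x y = 0"
  using decomposition by (simp add: standard_decomposition_def abelian_subalgebra_def)

lemma orthogonal_g_a: "x \<in> g \<Longrightarrow> y \<in> a \<Longrightarrow> B x y = 0" "x \<in> g \<Longrightarrow> y \<in> a \<Longrightarrow> B y x = 0"
  using decomposition symmetric by (auto simp: standard_decomposition_def)

lemma g_plus_a: "\<exists>x\<in>g. \<exists>y\<in>a. v = x + y"
  using decomposition by (simp add: standard_decomposition_def)

lemma nilpotent_g: "nilpotent_sub br g"
  using decomposition by (simp add: standard_decomposition_def)

lemma u_mem: "j < m \<Longrightarrow> u j \<in> g" and e_mem: "s < k \<Longrightarrow> e s \<in> a"
  using frame_g frame_a by (simp_all add: orthonormal_basis_def)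

lemma e_orthonormal: "s < k \<Longrightarrow> t < k \<Longrightarrow> B (e s) (e t) = (if s = t then eps s else 0)"
  using frame_a by (simp add: orthonormal_basis_def)

lemma eps_square: "s < k \<Longrightarrow> eps s * eps s = 1"
  using frame_a by (auto simp: orthonormal_basis_def)

sublocale g_frame: bracket_frame B br g "{..<m}" u eta
  by unfold_locales (use frame_g in \<open>auto simp: orthonormal_basis_def\<close>)

sublocale full_frame: bracket_frame B br UNIV "Inl ` {..<m} \<union> Inr ` {..<k}" "case_sum u e" "case_sum eta eps"
proof unfold_locales
  show "finite (Inl ` {..<m} \<union> Inr ` {..<k})"
    by simp
next
  fix i assume "i \<in> Inl ` {..<m} \<union> Inr ` {..<k}"
  then show "case_sum eta eps i * case_sum eta eps i = 1"
    using g_frame.sign_square eps_square by auto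
next
  fix i j assume "i \<in> Inl ` {..<m} \<union> Inr ` {..<k}" "j \<in> Inl ` {..<m} \<union> Inr ` {..<k}"
  then show "B (case_sum u e i) (case_sum u e j) = (if i = j then case_sum eta eps i else 0)"
    using g_frame.orthonormal e_orthonormal orthogonal_g_a u_mem e_mem by (auto split: if_splits)
next
  have "case_sum u e ` (Inl ` {..<m} \<union> Inr ` {..<k}) = u ` {..<m} \<union> e ` {..<k}"
    by (auto simp: image_Un image_image)
  then have "span (case_sum u e ` (Inl ` {..<m} \<union> Inr ` {..<k})) = {x + y | x y. x \<in> g \<and> y \<in> a}"
    using g_frame.span_frame frame_a by (simp add: real_vector.span_Un orthonormal_basis_def)
  then show "span (case_sum u e ` (Inl ` {..<m} \<union> Inr ` {..<k})) = UNIV"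
    using g_plus_a by blast
qed

lemma sum_full_index:
  "(\<Sum>i\<in>Inl ` {..<m} \<union> Inr ` {..<k}. f i) = (\<Sum>j<m. f (Inl j)) + (\<Sum>s<k. f (Inr s))"
  by (subst sum.union_disjoint) (auto simp: sum.reindex)

abbreviation \<phi> :: "nat \<Rightarrow> 'a \<Rightarrow> 'a" where "\<phi> s \<equiv> \<lambda>v. br v (e s)"
abbreviation \<phi>_adj :: "nat \<Rightarrow> 'a \<Rightarrow> 'a" where "\<phi>_adj s \<equiv> adjoint_on B g (\<phi> s)"
abbreviation LC :: "'a \<Rightarrow> 'a \<Rightarrow> 'a" where "LC \<equiv> levi_civita br B UNIV"
abbreviation LC_g :: "'a \<Rightarrow> 'a \<Rightarrow> 'a" where "LC_g \<equiv> levi_civita br B g"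

lemma linear_\<phi>: "linear (\<phi> s)"
  by (rule linear_bracket_left)

lemma linear_\<phi>_adj: "linear (\<phi>_adj s)"
  by (rule g_frame.linear_adjoint_on[OF linear_\<phi>])

lemma \<phi>_adj_mem: "\<phi>_adj s v \<in> g"
  by (rule g_frame.adjoint_on_mem[OF linear_\<phi>])

lemma \<phi>_adj_eq: "W \<in> g \<Longrightarrow> B (\<phi>_adj s v) W = B v (\<phi> s W)"
  by (rule g_frame.adjoint_on_eq[OF linear_\<phi>])

lemma \<phi>_plus_adj_self_adjoint:
  assumes "X \<in> g" "W \<in> g"
  shows "B (\<phi> s X + \<phi>_adj s X) W = B X (\<phi> s W + \<phi>_adj s W)"
  using \<phi>_adj_eq[OF assms(2), of s X] \<phi>_adj_eq[OF assms(1), of s W]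
    symmetric[of X "\<phi>_adj s W"] symmetric[of W "\<phi> s X"]
  by (simp add: add.commute)

lemma e_bracket_mem: "s < k \<Longrightarrow> br (e s) x \<in> g"
proof -
  assume s: "s < k"
  obtain y z where "y \<in> g" "z \<in> a" "x = y + z"
    using g_plus_a by blast
  then show ?thesis
    using bracket_mem_g(2)[of y "e s"] bracket_a_a[OF e_mem[OF s]] by simp
qed

lemma bracket_e_mem: "s < k \<Longrightarrow> br x (e s) \<in> g"
proof -
  assume "s < k"
  have "br x (e s) = - br (e s) x"
    by (rule bracket_antisym)
  then show ?thesis
    using e_bracket_mem[OF \<open>s < k\<close>, of x] real_vector.subspace_neg[OF g_frame.subspace] by simp
qed

lemma koszul_g_e_g:
  assumes "X \<in> g" "W \<in> g" "s < k"
  shows "koszul X (e s) W = B (\<phi> s X) W + B (\<phi> s W) X"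
  using assms orthogonal_g_a(1)[OF bracket_mem_g(1)[of W X] e_mem] bracket_antisym[of "e s" W]
  by (simp add: koszul_def)

lemma koszul_g_g_e:
  assumes "X \<in> g" "Y \<in> g" "s < k"
  shows "koszul X Y (e s) = - B (\<phi> s Y) X - B (\<phi> s X) Y"
  using assms orthogonal_g_a(1)[OF bracket_mem_g(1)[of X Y] e_mem] bracket_antisym[of "e s" X]
  by (simp add: koszul_def)

lemma koszul_e_g_g:
  assumes "X \<in> g" "W \<in> g" "s < k"
  shows "koszul (e s) X W = B (\<phi> s W) X - B (\<phi> s X) W"
  using assms orthogonal_g_a(1)[OF bracket_mem_g(1)[of X W] e_mem] bracket_antisym[of "e s" X]
  by (simp add: koszul_def)

lemma koszul_e_self: "s < k \<Longrightarrow> koszul (e s) Y (e s) = 0"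
  using koszul_self[of "e s" Y] orthogonal_g_a(1)[OF e_bracket_mem e_mem] by simp

lemma form_sum_e_e:
  assumes t: "t < k"
  shows "B (\<Sum>s<k. (eps s * c s) *\<^sub>R e s) (e t) = c t"
proof -
  have "B (\<Sum>s<k. (eps s * c s) *\<^sub>R e s) (e t) = (\<Sum>s<k. if s = t then eps t * eps t * c t else 0)"
    unfolding sum_left by (intro sum.cong refl) (auto simp: e_orthonormal t)
  then show ?thesis
    using t eps_square[OF t] by simp
qed

lemma form_sum_e_g: "x \<in> g \<Longrightarrow> B (\<Sum>s<k. c s *\<^sub>R e s) x = 0"
  by (simp add: sum_left orthogonal_g_a e_mem)

lemma LC_eqI:
  assumes "\<And>j. j < m \<Longrightarrow> B Z (u j) = koszul X Y (u j) / 2"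
    and "\<And>s. s < k \<Longrightarrow> B Z (e s) = koszul X Y (e s) / 2"
  shows "LC X Y = Z"
  using assms by (intro full_frame.levi_civita_eqI) auto

lemma LC_g_g:
  assumes X: "X \<in> g" and Y: "Y \<in> g"
  shows "LC X Y = LC_g X Y - (\<Sum>s<k. (eps s * (B (\<phi> s X + \<phi>_adj s X) Y / 2)) *\<^sub>R e s)"
proof (rule LC_eqI)
  fix j assume "j < m"
  then show "B (LC_g X Y - (\<Sum>s<k. (eps s * (B (\<phi> s X + \<phi>_adj s X) Y / 2)) *\<^sub>R e s)) (u j)
      = koszul X Y (u j) / 2"
    by (simp add: g_frame.levi_civita_koszul u_mem form_sum_e_g)
next
  fix t assume t: "t < k"
  have "B (\<phi>_adj t X) Y = B (\<phi> t Y) X"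
    using \<phi>_adj_eq[OF Y, of t X] symmetric[of X] by simp
  then show "B (LC_g X Y - (\<Sum>s<k. (eps s * (B (\<phi> s X + \<phi>_adj s X) Y / 2)) *\<^sub>R e s)) (e t)
      = koszul X Y (e t) / 2"
    unfolding form_simps(3) form_sum_e_e[OF t]
    using t by (simp add: koszul_g_g_e X Y orthogonal_g_a g_frame.levi_civita_mem e_mem field_simps)
qed

lemma LC_g_e:
  assumes X: "X \<in> g" and s: "s < k"
  shows "LC X (e s) = (1/2) *\<^sub>R (\<phi> s X + \<phi>_adj s X)"
proof (rule LC_eqI)
  fix j assume j: "j < m"
  then show "B ((1/2) *\<^sub>R (\<phi> s X + \<phi>_adj s X)) (u j) = koszul X (e s) (u j) / 2"
    using \<phi>_adj_eq[OF u_mem[OF j], of s X] symmetric[of X "\<phi> s (u j)"]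
    by (simp add: koszul_g_e_g X s u_mem field_simps)
next
  fix t assume t: "t < k"
  have "koszul X (e s) (e t) = 0"
    using orthogonal_g_a(1)[OF bracket_mem_g(1)[OF X] e_mem[OF t]]
      orthogonal_g_a(1)[OF bracket_mem_g(2)[OF X] e_mem[OF s]] bracket_a_a[OF e_mem[OF s] e_mem[OF t]]
    by (simp add: koszul_def)
  then show "B ((1/2) *\<^sub>R (\<phi> s X + \<phi>_adj s X)) (e t) = koszul X (e s) (e t) / 2"
    using orthogonal_g_a(1)[OF bracket_mem_g(1)[OF X] e_mem[OF t]] orthogonal_g_a(1)[OF \<phi>_adj_mem e_mem[OF t]]
    by simp
qed

lemma LC_e_g:
  assumes X: "X \<in> g" and s: "s < k"
  shows "LC (e s) X = (1/2) *\<^sub>R (\<phi>_adj s X - \<phi> s X)"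
proof (rule LC_eqI)
  fix j assume j: "j < m"
  then show "B ((1/2) *\<^sub>R (\<phi>_adj s X - \<phi> s X)) (u j) = koszul (e s) X (u j) / 2"
    using \<phi>_adj_eq[OF u_mem[OF j], of s X] symmetric[of X "\<phi> s (u j)"]
    by (simp add: koszul_e_g_g X s u_mem field_simps)
next
  fix t assume t: "t < k"
  have "koszul (e s) X (e t) = 0"
    using orthogonal_g_a(1)[OF e_bracket_mem[OF s] e_mem[OF t]]
      orthogonal_g_a(1)[OF bracket_mem_g(1)[OF X] e_mem[OF s]] bracket_a_a[OF e_mem[OF t] e_mem[OF s]]
    by (simp add: koszul_def)
  then show "B ((1/2) *\<^sub>R (\<phi>_adj s X - \<phi> s X)) (e t) = koszul (e s) X (e t) / 2"
    using orthogonal_g_a(1)[OF bracket_mem_g(1)[OF X] e_mem[OF t]] orthogonal_g_a(1)[OF \<phi>_adj_mem e_mem[OF t]]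
    by simp
qed

lemma LC_e_e:
  assumes s: "s < k" and r: "r < k"
  shows "LC (e s) (e r) = 0"
proof (rule LC_eqI)
  fix j assume j: "j < m"
  show "B 0 (u j) = koszul (e s) (e r) (u j) / 2"
    using bracket_a_a[OF e_mem[OF s] e_mem[OF r]] orthogonal_g_a(1)[OF e_bracket_mem[OF r] e_mem[OF s]]
      orthogonal_g_a(1)[OF bracket_e_mem[OF s] e_mem[OF r]]
    by (simp add: koszul_def)
next
  fix t assume t: "t < k"
  show "B 0 (e t) = koszul (e s) (e r) (e t) / 2"
    using bracket_a_a[OF e_mem[OF s] e_mem[OF r]] bracket_a_a[OF e_mem[OF r] e_mem[OF t]]
      bracket_a_a[OF e_mem[OF t] e_mem[OF s]]
    by (simp add: koszul_def)
qed

lemma ricci_full_frame: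
  "ricci br B UNIV X Y = (\<Sum>j<m. eta j * B (curvature br B UNIV (u j) X Y) (u j))
    + (\<Sum>s<k. eps s * B (curvature br B UNIV (e s) X Y) (e s))"
  by (simp add: full_frame.ricci_on_frame sum_full_index)

lemma curvature_e_e_e:
  assumes t: "t < k" and r: "r < k"
  shows "B (curvature br B UNIV (e t) X (e r)) (e t) = 0"
proof -
  have "koszul (br (e t) X) (e r) (e t) = 0"
    using bracket_a_a[OF e_mem[OF r] e_mem[OF t]] orthogonal_g_a(1)[OF bracket_e_mem[OF r] e_mem[OF t]]
      orthogonal_g_a(1)[OF e_bracket_mem[OF t] e_mem[OF r]]
    by (simp add: koszul_def)
  then show ?thesis
    by (simp add: full_frame.curvature_koszul koszul_e_self t LC_e_e r)
qed

lemma ricci_right_e: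
  "r < k \<Longrightarrow> ricci br B UNIV X (e r) = (\<Sum>j<m. eta j * B (curvature br B UNIV (u j) X (e r)) (u j))"
  by (simp add: ricci_full_frame curvature_e_e_e)

lemma curvature_g_g_g:
  assumes U: "U \<in> g" and v: "v \<in> g" and w: "w \<in> g"
  shows "B (curvature br B UNIV U v w) U = B (curvature br B g U v w) U
    - (\<Sum>s<k. eps s * B (\<phi> s v + \<phi>_adj s v) w / 2 * B (\<phi> s U) U)
    + (\<Sum>s<k. eps s * B (\<phi> s v + \<phi>_adj s v) U * B U (\<phi> s w + \<phi>_adj s w) / 4)"
proof -
  have first: "koszul U (LC v w) U = koszul U (LC_g v w) U
      - 2 * (\<Sum>s<k. eps s * B (\<phi> s v + \<phi>_adj s v) w / 2 * B (\<phi> s U) U)"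
    unfolding LC_g_g[OF v w] koszul_diff_middle koszul_sum_middle
    by (simp add: koszul_self sum_distrib_left mult_ac)
  have "koszul v (e s) U = B (\<phi> s v + \<phi>_adj s v) U" if "s < k" for s
    using koszul_g_e_g[OF v U that] \<phi>_adj_eq[OF U, of s v] symmetric[of v "\<phi> s U"] by simp
  moreover have "B (\<phi> s U) w + B (\<phi>_adj s U) w = B U (\<phi> s w) + B U (\<phi>_adj s w)" for s
    using \<phi>_plus_adj_self_adjoint[OF U w, of s] by simp
  ultimately have second: "koszul v (LC U w) U = koszul v (LC_g U w) U
      - 2 * (\<Sum>s<k. eps s * B (\<phi> s v + \<phi>_adj s v) U * B U (\<phi> s w + \<phi>_adj s w) / 4)"
    unfolding LC_g_g[OF U w] koszul_diff_middle koszul_sum_middle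
    by (simp add: sum_distrib_left mult_ac)
  show ?thesis
    unfolding full_frame.curvature_koszul[OF UNIV_I] g_frame.curvature_koszul[OF U] first second
    by (simp add: field_simps)
qed

lemma curvature_e_g_g:
  assumes v: "v \<in> g" and w: "w \<in> g" and s: "s < k"
  shows "B (curvature br B UNIV (e s) v w) (e s)
    = B (\<phi> s (\<phi>_adj s v) - \<phi>_adj s (\<phi> s v)) w / 2
      - B (\<phi> s v + \<phi>_adj s v) (\<phi> s w + \<phi>_adj s w) / 4"
proof -
  define y where "y = (1/2) *\<^sub>R (\<phi>_adj s w - \<phi> s w)"
  have y: "y \<in> g"
    unfolding y_def using g_frame.subspace
    by (intro real_vector.subspace_scale real_vector.subspace_diff \<phi>_adj_mem bracket_mem_g(1) w)
  have LC_part: "koszul v (LC (e s) w) (e s) = - B (\<phi>_adj s v) y - B (\<phi> s v) y"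
    using koszul_g_g_e[OF v y s] \<phi>_adj_eq[OF y, of s v] symmetric[of v "\<phi> s y"]
    by (simp add: LC_e_g[OF w s] y_def[symmetric])
  have bracket_part: "koszul (br (e s) v) w (e s) = B (\<phi> s w) (\<phi> s v) + B (\<phi> s v) (\<phi>_adj s w)"
    using bracket_antisym[of "e s" v] koszul_g_g_e[OF bracket_mem_g(1)[OF v] w s]
      \<phi>_adj_eq[OF bracket_mem_g(1)[OF v], of s w] symmetric[of w "\<phi> s (\<phi> s v)"]
      symmetric[of "\<phi>_adj s w" "\<phi> s v"]
    by simp
  have "B (\<phi> s (\<phi>_adj s v)) w = B (\<phi>_adj s v) (\<phi>_adj s w)"
    using \<phi>_adj_eq[OF \<phi>_adj_mem, of s w] symmetric by metis
  moreover have "B (\<phi>_adj s (\<phi> s v)) w = B (\<phi> s v) (\<phi> s w)"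
    by (rule \<phi>_adj_eq[OF w])
  ultimately show ?thesis
    unfolding full_frame.curvature_koszul[OF UNIV_I] koszul_e_self[OF s] LC_part bracket_part
    using symmetric[of "\<phi> s w" "\<phi> s v"] symmetric[of "\<phi>_adj s w" "\<phi>_adj s v"]
      symmetric[of "\<phi> s w" "\<phi>_adj s v"]
    by (simp add: y_def field_simps)
qed

lemma curvature_g_g_e:
  assumes U: "U \<in> g" and v: "v \<in> g" and r: "r < k"
  shows "B (curvature br B UNIV U v (e r)) U = (- 2 * B (br (\<phi> r v + \<phi>_adj r v) U) U
    - B (br v (\<phi> r U)) U - B (br v (\<phi>_adj r U)) U + B (br (\<phi> r U) U) v + B (br (\<phi>_adj r U) U) v
    + 3 * B (br v U) (\<phi> r U) + 3 * B (\<phi> r (br v U)) U) / 4"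
proof -
  have first: "koszul U (LC v (e r)) U = - B (br (\<phi> r v + \<phi>_adj r v) U) U"
    using bracket_antisym[of "\<phi> r v + \<phi>_adj r v" U]
    by (simp add: LC_g_e[OF v r] koszul_self)
  have adj: "B (br v U) (\<phi>_adj r U) = B (\<phi> r (br v U)) U"
    using \<phi>_adj_eq[OF bracket_mem_g(1)[OF v], of r U] symmetric[of "br v U" "\<phi>_adj r U"]
      symmetric[of U "\<phi> r (br v U)"]
    by simp
  have second: "koszul v (LC U (e r)) U = (B (br v (\<phi> r U)) U + B (br v (\<phi>_adj r U)) U
      - B (br (\<phi> r U) U) v - B (br (\<phi>_adj r U) U) v - B (br v U) (\<phi> r U) - B (\<phi> r (br v U)) U) / 2"
    using bracket_antisym[of v U] adj
    by (simp add: LC_g_e[OF U r] koszul_def field_simps)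
  have third: "koszul (br U v) (e r) U = - B (\<phi> r (br v U)) U - B (br v U) (\<phi> r U)"
    using koszul_g_e_g[OF bracket_mem_g(1)[OF U] U r, of v] bracket_antisym[of v U]
      symmetric[of "\<phi> r U" "br v U"]
    by simp
  show ?thesis
    unfolding full_frame.curvature_koszul[OF UNIV_I] first second third
    by (simp add: field_simps)
qed

lemma curvature_g_e_e:
  assumes U: "U \<in> g" and s: "s < k" and r: "r < k"
  shows "B (curvature br B UNIV U (e s) (e r)) U = (B (\<phi> s (\<phi> r U)) U + B (\<phi> s (\<phi>_adj r U)) U
    - 3 * B (\<phi> s U) (\<phi> r U) - 3 * B (\<phi> r (\<phi> s U)) U) / 4"
proof -
  define y where "y = (1/2) *\<^sub>R (\<phi> r U + \<phi>_adj r U)"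
  have y: "y \<in> g"
    unfolding y_def using g_frame.subspace
    by (intro real_vector.subspace_scale real_vector.subspace_add \<phi>_adj_mem bracket_mem_g(1) U)
  have LC_part: "koszul (e s) (LC U (e r)) U = B (\<phi> s U) y - B (\<phi> s y) U"
    unfolding LC_g_e[OF U r] y_def[symmetric] by (rule koszul_e_g_g[OF y U s])
  have bracket_part: "koszul (br U (e s)) (e r) U = B (\<phi> r (\<phi> s U)) U + B (\<phi> r U) (\<phi> s U)"
    by (rule koszul_g_e_g[OF bracket_mem_g(1)[OF U] U r])
  have "B (\<phi> s U) (\<phi>_adj r U) = B (\<phi> r (\<phi> s U)) U"
    using \<phi>_adj_eq[OF bracket_mem_g(1)[OF U], of r U] symmetric by metis
  then show ?thesis
    unfolding full_frame.curvature_koszul[OF UNIV_I] LC_e_e[OF s r] LC_part bracket_part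
    using symmetric[of "\<phi> r U" "\<phi> s U"]
    by (simp add: y_def field_simps)
qed

lemma subspace_lower_central: "subspace (lower_central br g j)"
  by (cases j) (simp_all add: g_frame.subspace bracket_span_def real_vector.subspace_span)

lemma lower_central_Suc_subset: "lower_central br g (Suc j) \<subseteq> lower_central br g j"
proof (induction j)
  case 0
  show ?case
    unfolding lower_central.simps bracket_span_def
    by (rule real_vector.span_minimal) (auto simp: bracket_mem_g g_frame.subspace)
next
  case (Suc j)
  then show ?case
    unfolding lower_central.simps bracket_span_def
    by (intro real_vector.span_mono) (auto simp: bracket_span_def)
qed

lemma bracket_mem_lower_central_Suc:
  "z \<in> g \<Longrightarrow> x \<in> lower_central br g j \<Longrightarrow> br z x \<in> lower_central br g (Suc j)"
  by (auto simp: bracket_span_def intro!: real_vector.span_base)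

lemma \<phi>_derivation: "\<phi> s (br x y) = br x (\<phi> s y) + br (\<phi> s x) y"
proof -
  have "br x (br y (e s)) + br y (br (e s) x) + br (e s) (br x y) = 0"
    by (rule jacobi)
  moreover have "br y (br (e s) x) = br (br x (e s)) y"
    using bracket_antisym[of y "br (e s) x"] bracket_antisym[of "e s" x] by simp
  moreover have "br (e s) (br x y) = - br (br x y) (e s)"
    by (rule bracket_antisym)
  ultimately show ?thesis
    by (simp add: algebra_simps eq_neg_iff_add_eq_0)
qed

lemma \<phi>_mem_lower_central: "x \<in> lower_central br g j \<Longrightarrow> \<phi> s x \<in> lower_central br g j"
proof (induction j arbitrary: x)
  case 0
  then show ?case
    using bracket_mem_g(1) by simp
next
  case (Suc j)
  have "x \<in> span {br y z | y z. y \<in> g \<and> z \<in> lower_central br g j}"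
    using Suc.prems by (simp add: bracket_span_def)
  moreover have "subspace {x. \<phi> s x \<in> lower_central br g (Suc j)}"
    unfolding vimage_def[symmetric]
    by (rule real_vector.linear_subspace_vimage[OF linear_\<phi> subspace_lower_central])
  ultimately show ?case
  proof (rule real_vector.span_induct)
    fix x assume "x \<in> {br y z | y z. y \<in> g \<and> z \<in> lower_central br g j}"
    then obtain y z where yz: "y \<in> g" "z \<in> lower_central br g j" "x = br y z"
      by blast
    have "br y (\<phi> s z) \<in> lower_central br g (Suc j)"
      by (rule bracket_mem_lower_central_Suc[OF yz(1) Suc.IH[OF yz(2)]])
    moreover have "br (\<phi> s y) z \<in> lower_central br g (Suc j)"
      by (rule bracket_mem_lower_central_Suc[OF bracket_mem_g(1)[OF yz(1)] yz(2)])
    ultimately show "\<phi> s x \<in> lower_central br g (Suc j)"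
      unfolding yz(3) \<phi>_derivation using real_vector.subspace_add[OF subspace_lower_central] by blast
  qed
qed

lemma trace_on_g_eq_0:
  assumes "linear f" "\<And>j x. x \<in> lower_central br g j \<Longrightarrow> f x \<in> lower_central br g (Suc j)"
  shows "trace_on g f = 0"
proof -
  obtain n where "lower_central br g n = {0}"
    using nilpotent_g by (auto simp: nilpotent_sub_def)
  then show ?thesis
    using g_frame.trace_on_eq_0_if_lowers_filtration[where F = "lower_central br g", OF assms(1)
        subspace_lower_central lower_central_Suc_subset _ _ assms(2)]
    by simp
qed

lemma trace_on_ad_eq_0: "z \<in> g \<Longrightarrow> trace_on g (br z) = 0"
  by (rule trace_on_g_eq_0[OF linear_bracket_right bracket_mem_lower_central_Suc])

lemma trace_on_ad_comp_\<phi>_eq_0: "v \<in> g \<Longrightarrow> trace_on g (br v \<circ> \<phi> s) = 0"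
  by (rule trace_on_g_eq_0[OF linear_compose[OF linear_\<phi> linear_bracket_right]])
    (simp only: o_apply, blast intro: bracket_mem_lower_central_Suc \<phi>_mem_lower_central)

lemma trace_on_\<phi>_comp_ad_eq_0: "v \<in> g \<Longrightarrow> trace_on g (\<phi> s \<circ> br v) = 0"
  by (rule trace_on_g_eq_0[OF linear_compose[OF linear_bracket_right linear_\<phi>]])
    (simp only: o_apply, blast intro: bracket_mem_lower_central_Suc \<phi>_mem_lower_central)

lemma ricci_e_e:
  assumes s: "s < k" and r: "r < k"
  shows "ricci br B UNIV (e s) (e r)
    = - 1/2 * endo_inner B m u eta (\<phi> s) (\<phi> r) - 1/2 * trace_on g (\<phi> s \<circ> \<phi> r)"
proof -
  define ip where "ip = endo_inner B m u eta (\<phi> s) (\<phi> r)"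
  define tr where "tr = trace_on g (\<phi> s \<circ> \<phi> r)"
  have tr_sr: "(\<Sum>j<m. eta j * B (\<phi> s (\<phi> r (u j))) (u j)) = tr"
    using g_frame.trace_on_frame[OF linear_compose[OF linear_\<phi>[of r] linear_\<phi>[of s]]]
    by (simp add: tr_def bracket_mem_g)
  have tr_rs: "(\<Sum>j<m. eta j * B (\<phi> r (\<phi> s (u j))) (u j)) = tr"
    using g_frame.trace_on_frame[OF linear_compose[OF linear_\<phi>[of s] linear_\<phi>[of r]]]
      g_frame.trace_on_comp_commute[OF linear_\<phi>[of s] bracket_mem_g(1) linear_\<phi>[of r] bracket_mem_g(1)]
    by (simp add: tr_def bracket_mem_g)
  have tr_adj: "(\<Sum>j<m. eta j * B (\<phi> s (\<phi>_adj r (u j))) (u j)) = ip"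
    using g_frame.trace_on_frame[OF linear_compose[OF linear_\<phi>_adj[of r] linear_\<phi>[of s]]]
      g_frame.trace_on_comp_adjoint[OF linear_\<phi>[of r] linear_\<phi>[of s] bracket_mem_g(1)]
    by (simp add: ip_def endo_inner_def bracket_mem_g \<phi>_adj_mem)
  have "ricci br B UNIV (e s) (e r) = (\<Sum>j<m. eta j * B (curvature br B UNIV (u j) (e s) (e r)) (u j))"
    by (rule ricci_right_e[OF r])
  also have "\<dots> = (\<Sum>j<m. eta j * B (\<phi> s (\<phi> r (u j))) (u j) / 4 + eta j * B (\<phi> s (\<phi>_adj r (u j))) (u j) / 4
      - 3 * (eta j * B (\<phi> s (u j)) (\<phi> r (u j))) / 4 - 3 * (eta j * B (\<phi> r (\<phi> s (u j))) (u j)) / 4)"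
    by (intro sum.cong refl) (simp add: curvature_g_e_e[OF u_mem s r] field_simps)
  also have "\<dots> = (\<Sum>j<m. eta j * B (\<phi> s (\<phi> r (u j))) (u j)) / 4
      + (\<Sum>j<m. eta j * B (\<phi> s (\<phi>_adj r (u j))) (u j)) / 4
      - 3 * (\<Sum>j<m. eta j * B (\<phi> s (u j)) (\<phi> r (u j))) / 4
      - 3 * (\<Sum>j<m. eta j * B (\<phi> r (\<phi> s (u j))) (u j)) / 4"
    by (simp add: sum.distrib sum_subtractf sum_divide_distrib sum_distrib_left)
  finally show ?thesis
    unfolding tr_sr tr_rs tr_adj by (simp add: ip_def tr_def endo_inner_def)
qed

lemma ricci_g_e_frame_sums:
  assumes v: "v \<in> g" and r: "r < k"
  shows "ricci br B UNIV v (e r) = - (\<Sum>j<m. eta j * B (br (\<phi> r v + \<phi>_adj r v) (u j)) (u j)) / 2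
      - (\<Sum>j<m. eta j * B (br v (\<phi> r (u j))) (u j)) / 4 - (\<Sum>j<m. eta j * B (br v (\<phi>_adj r (u j))) (u j)) / 4
      + ((\<Sum>j<m. eta j * B (br (\<phi> r (u j)) (u j)) v) + (\<Sum>j<m. eta j * B (br (\<phi>_adj r (u j)) (u j)) v)) / 4
      + 3 * (\<Sum>j<m. eta j * B (br v (u j)) (\<phi> r (u j))) / 4 + 3 * (\<Sum>j<m. eta j * B (\<phi> r (br v (u j))) (u j)) / 4"
proof -
  define z where "z = \<phi> r v + \<phi>_adj r v"
  have "ricci br B UNIV v (e r) = (\<Sum>j<m. - (eta j * B (br z (u j)) (u j)) / 2
      - eta j * B (br v (\<phi> r (u j))) (u j) / 4 - eta j * B (br v (\<phi>_adj r (u j))) (u j) / 4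
      + eta j * B (br (\<phi> r (u j)) (u j)) v / 4 + eta j * B (br (\<phi>_adj r (u j)) (u j)) v / 4
      + 3 * (eta j * B (br v (u j)) (\<phi> r (u j))) / 4 + 3 * (eta j * B (\<phi> r (br v (u j))) (u j)) / 4)"
    unfolding ricci_right_e[OF r]
    by (intro sum.cong refl) (simp add: curvature_g_g_e[OF u_mem v r] z_def field_simps)
  then show ?thesis
    unfolding z_def[symmetric]
    by (simp add: sum.distrib sum_subtractf sum_divide_distrib sum_distrib_left sum_negf add_divide_distrib)
qed

lemma ricci_g_e:
  assumes v: "v \<in> g" and r: "r < k"
  shows "ricci br B UNIV v (e r) = 1/2 * endo_inner B m u eta (br v) (\<phi> r)"
proof -
  define z where "z = \<phi> r v + \<phi>_adj r v"
  have "z \<in> g"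
    unfolding z_def using g_frame.subspace by (intro real_vector.subspace_add bracket_mem_g(1) v \<phi>_adj_mem)
  then have tr_ad: "(\<Sum>j<m. eta j * B (br z (u j)) (u j)) = 0"
    using g_frame.trace_on_frame[OF linear_bracket_right, of z] trace_on_ad_eq_0 by (simp add: bracket_mem_g)
  have tr_ad_\<phi>: "(\<Sum>j<m. eta j * B (br v (\<phi> r (u j))) (u j)) = 0"
    using g_frame.trace_on_frame[OF linear_compose[OF linear_\<phi>[of r] linear_bracket_right[of v]]]
      trace_on_ad_comp_\<phi>_eq_0[OF v]
    by (simp add: bracket_mem_g)
  have tr_\<phi>_ad: "(\<Sum>j<m. eta j * B (\<phi> r (br v (u j))) (u j)) = 0"
    using g_frame.trace_on_frame[OF linear_compose[OF linear_bracket_right[of v] linear_\<phi>[of r]]]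
      trace_on_\<phi>_comp_ad_eq_0[OF v]
    by (simp add: bracket_mem_g v)
  have tr_ad_adj: "(\<Sum>j<m. eta j * B (br v (\<phi>_adj r (u j))) (u j)) = endo_inner B m u eta (br v) (\<phi> r)"
    using g_frame.trace_on_frame[OF linear_compose[OF linear_\<phi>_adj[of r] linear_bracket_right[of v]]]
      g_frame.trace_on_comp_adjoint[OF linear_\<phi>[of r] linear_bracket_right[of v] bracket_mem_g(2)]
    by (simp add: endo_inner_def bracket_mem_g \<phi>_adj_mem)
  have adjoint_pair: "(\<Sum>j<m. eta j * B (br (\<phi> r (u j)) (u j)) v)
      + (\<Sum>j<m. eta j * B (br (\<phi>_adj r (u j)) (u j)) v) = 0"
    using g_frame.frame_sum_bracket_adjoint[OF linear_\<phi>[of r] bracket_mem_g(1), of v] by simp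
  show ?thesis
    unfolding ricci_g_e_frame_sums[OF v r, folded z_def] tr_ad tr_ad_\<phi> tr_\<phi>_ad tr_ad_adj adjoint_pair
    by (simp add: endo_inner_def)
qed

lemma frame_sum_curvature_g_g:
  assumes v: "v \<in> g" and w: "w \<in> g"
  shows "(\<Sum>j<m. eta j * B (curvature br B UNIV (u j) v w) (u j)) = ricci br B g v w
    - (\<Sum>s<k. eps s * B (\<phi> s v + \<phi>_adj s v) w / 2 * trace_on g (\<phi> s))
    + (\<Sum>s<k. eps s * B (\<phi> s v + \<phi>_adj s v) (\<phi> s w + \<phi>_adj s w) / 4)"
proof -
  define a where "a s = \<phi> s v + \<phi>_adj s v" for s
  define b where "b s = \<phi> s w + \<phi>_adj s w" for s
  have a_mem: "a s \<in> g" for s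
    unfolding a_def using g_frame.subspace by (intro real_vector.subspace_add bracket_mem_g(1) v \<phi>_adj_mem)
  have trace_term: "(\<Sum>j<m. eta j * (eps s * B (a s) w / 2 * B (\<phi> s (u j)) (u j)))
      = eps s * B (a s) w / 2 * trace_on g (\<phi> s)" for s
    using g_frame.trace_on_frame[OF linear_\<phi>[of s]] by (simp add: bracket_mem_g sum_distrib_left mult_ac)
  have parseval_term: "(\<Sum>j<m. eta j * (eps s * B (a s) (u j) * B (u j) (b s) / 4)) = eps s * B (a s) (b s) / 4"
    for s
    using g_frame.parseval[OF a_mem, of s "b s"] by (simp add: sum_distrib_left sum_divide_distrib mult_ac)
  have "(\<Sum>j<m. eta j * B (curvature br B UNIV (u j) v w) (u j))
      = (\<Sum>j<m. eta j * B (curvature br B g (u j) v w) (u j)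
          - (\<Sum>s<k. eta j * (eps s * B (a s) w / 2 * B (\<phi> s (u j)) (u j)))
          + (\<Sum>s<k. eta j * (eps s * B (a s) (u j) * B (u j) (b s) / 4)))"
    by (intro sum.cong refl)
      (simp add: curvature_g_g_g[OF u_mem v w, folded a_def b_def] right_diff_distrib distrib_left sum_distrib_left)
  also have "\<dots> = ricci br B g v w
      - (\<Sum>s<k. \<Sum>j<m. eta j * (eps s * B (a s) w / 2 * B (\<phi> s (u j)) (u j)))
      + (\<Sum>s<k. \<Sum>j<m. eta j * (eps s * B (a s) (u j) * B (u j) (b s) / 4))"
    by (simp only: g_frame.ricci_on_frame sum.distrib sum_subtractf sum.swap[of _ "{..<k}" "{..<m}"])
  finally have "(\<Sum>j<m. eta j * B (curvature br B UNIV (u j) v w) (u j)) = ricci br B g v w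
      - (\<Sum>s<k. eps s * B (a s) w / 2 * trace_on g (\<phi> s)) + (\<Sum>s<k. eps s * B (a s) (b s) / 4)"
    by (simp only: trace_term parseval_term)
  then show ?thesis
    by (simp only: a_def b_def)
qed

lemma ricci_g_g:
  assumes v: "v \<in> g" and w: "w \<in> g"
  shows "ricci br B UNIV v w = ricci br B g v w
    + (\<Sum>s<k. 1/2 * eps s * B (\<phi> s (\<phi>_adj s v) - \<phi>_adj s (\<phi> s v)) w
           - 1/2 * eps s * B (\<phi> s v + \<phi>_adj s v) w * trace_on g (\<phi> s))"
proof -
  define a where "a s = \<phi> s v + \<phi>_adj s v" for s
  define b where "b s = \<phi> s w + \<phi>_adj s w" for s
  define c where "c s = B (\<phi> s (\<phi>_adj s v) - \<phi>_adj s (\<phi> s v)) w" for s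
  have "(\<Sum>s<k. eps s * B (curvature br B UNIV (e s) v w) (e s))
      = (\<Sum>s<k. eps s * c s / 2 - eps s * B (a s) (b s) / 4)"
    by (intro sum.cong refl) (simp add: curvature_e_g_g[OF v w, folded a_def b_def c_def] right_diff_distrib)
  then have "ricci br B UNIV v w = ricci br B g v w
      + ((\<Sum>s<k. eps s * c s / 2 - eps s * B (a s) (b s) / 4)
        - (\<Sum>s<k. eps s * B (a s) w / 2 * trace_on g (\<phi> s)) + (\<Sum>s<k. eps s * B (a s) (b s) / 4))"
    unfolding ricci_full_frame frame_sum_curvature_g_g[OF v w, folded a_def b_def] by simp
  also have "\<dots> = ricci br B g v w + (\<Sum>s<k. 1/2 * eps s * c s - 1/2 * eps s * B (a s) w * trace_on g (\<phi> s))"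
    by (simp only: sum_subtractf[symmetric] sum.distrib[symmetric]) (intro arg_cong2[where f = "(+)"] sum.cong refl; simp)
  finally show ?thesis
    by (simp only: a_def c_def)
qed

end

theorem proposition1p10:
  fixes br :: "'a::euclidean_space \<Rightarrow> 'a \<Rightarrow> 'a" and B :: "'a \<Rightarrow> 'a \<Rightarrow> real"
    and g a :: "'a set" and k m :: nat and e u :: "nat \<Rightarrow> 'a" and eps eta :: "nat \<Rightarrow> real"
  assumes lie: "lie_algebra br" and solv: "solvable br" and met: "metric B"
    and dec: "standard_decomposition br B g a"
    and onb_a: "orthonormal_basis B a k e eps"
    and onb_g: "orthonormal_basis B g m u eta"
  defines "\<phi> \<equiv> (\<lambda>s v. br v (e s))"
  shows
    "(\<forall>v\<in>g. \<forall>w\<in>g. ricci br B UNIV v w = ricci br B g v w +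
        (\<Sum>s<k. 1/2 * eps s * B ((\<phi> s) (adjoint_on B g (\<phi> s) v) - adjoint_on B g (\<phi> s) ((\<phi> s) v)) w
               - 1/2 * eps s * B ((\<phi> s) v + adjoint_on B g (\<phi> s) v) w * trace_on g (\<phi> s))) \<and>
     (\<forall>v\<in>g. \<forall>s<k. ricci br B UNIV v (e s) = 1/2 * endo_inner B m u eta (br v) (\<phi> s)) \<and>
     (\<forall>s<k. \<forall>r<k. ricci br B UNIV (e s) (e r) =
        - 1/2 * endo_inner B m u eta (\<phi> s) (\<phi> r) - 1/2 * trace_on g (\<phi> s \<circ> \<phi> r))"
proof -
  interpret standard_decomposition_frames B br g a k m e u eps eta
    using lie met dec onb_a onb_g by unfold_locales (auto simp: lie_algebra_def metric_def)
  show ?thesis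
    unfolding \<phi>_def using ricci_g_g ricci_g_e ricci_e_e by simp
qed

end
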